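(* Let $(\zeta_t)_{t\ge0}$ be the multi-species ASEP with one open boundary on $[N]$ described in the context, started from an arbitrary configuration in $\{1,2,3,\infty\}^N$. Let $\bar\zeta_t\in\{0,1\}^N$ be defined by $\bar\zeta_t(x)=1$ if $\zeta_t(x)\in\{1,2\}$ and $\bar\zeta_t(x)=0$ if $\zeta_t(x)\in\{3,\infty\}$. Then $(\bar\zeta_t)_{t\ge0}$ has the law of an ASEP with one open boundary on $[N]$ with parameters $q,\alpha,\gamma$.
   Context: Parameters: $q\in(0,1)$, $\alpha>\gamma>0$. The ASEP with one open boundary on $[N]$ is the Markov chain on $\{0,1\}^N$ in which a particle at $x$ jumps to $x+1$ at rate $1$ and to $x-1$ at rate $q$, provided the target is a vacant site in $[N]$. In addition, a particle is created at site $1$ at rate $\alpha$ if site $1$ is vacant, and removed at rate $\gamma$ if site $1$ is occupied. Multi-species ASEP: the state space is $\{1,2,3,\infty\}^N$, with total order $1>_p2>_p3>_p\infty$ (values $1,2,3$ are first, second and third class particles, $\infty$ a hole). Each edge $\{x,x+1\}$, $x\in[N-1]$, carries independent rate-$1$ and rate-$q$ Poisson clocks. When the rate-$1$ clock rings, the two values on the edge are sorted so that the $>_p$-larger value is at $x+1$. When the rate-$q$ clock rings, they are sorted so that the $>_p$-larger value is at $x$. Site $1$ carries a rate-$\alpha$ clock and a rate-$\gamma$ clock. When the rate-$\alpha$ clock rings, a value $\infty$ at site $1$ becomes $1$ and a value $3$ becomes $2$. When the rate-$\gamma$ clock rings, a value $1$ at site $1$ becomes $\infty$ and a value $2$ becomes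 $3$. Other values at site $1$ are unchanged. *)

theory Defs
  imports Complex_Main
begin

definition mat_mult :: "'s set \<Rightarrow> ('s \<Rightarrow> 's \<Rightarrow> real) \<Rightarrow> ('s \<Rightarrow> 's \<Rightarrow> real) \<Rightarrow> 's \<Rightarrow> 's \<Rightarrow> real" where
  "mat_mult S A B = (\<lambda>x y. \<Sum>z\<in>S. A x z * B z y)"

fun mat_pow :: "'s set \<Rightarrow> ('s \<Rightarrow> 's \<Rightarrow> real) \<Rightarrow> nat \<Rightarrow> 's \<Rightarrow> 's \<Rightarrow> real" where
  "mat_pow S A 0 = (\<lambda>x y. if x = y then 1 else 0)"
| "mat_pow S A (Suc n) = mat_mult S (mat_pow S A n) A"

definition trans_sg :: "'s set \<Rightarrow> ('s \<Rightarrow> 's \<Rightarrow> real) \<Rightarrow> real \<Rightarrow> 's \<Rightarrow> 's \<Rightarrow> real" where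
  "trans_sg S Q t x y = (\<Sum>n. t ^ n / fact n * mat_pow S Q n x y)"

text \<open>Finite-dimensional distributions of the chain started at x at time s:
  fdd S Q x s [(t1,A1),...,(tk,Ak)] = P_x(X_{t1} \<in> A1, ..., X_{tk} \<in> Ak)
  for s \<le> t1 \<le> ... \<le> tk.\<close>
fun fdd :: "'s set \<Rightarrow> ('s \<Rightarrow> 's \<Rightarrow> real) \<Rightarrow> 's \<Rightarrow> real \<Rightarrow> (real \<times> 's set) list \<Rightarrow> real" where
  "fdd S Q x s [] = 1"
| "fdd S Q x s ((t, A) # rest) =
     (\<Sum>y\<in>S \<inter> A. trans_sg S Q (t - s) x y * fdd S Q y t rest)"

text \<open>Generator of a chain driven by Poisson clocks: clock c rings at rate r_c and
  applies the deterministic map T_c.  Q x y = sum_c r_c ([T_c x = y] - [x = y]).\<close>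
definition ind :: "bool \<Rightarrow> real" where "ind b = (if b then 1 else 0)"

definition clock_gen :: "(real \<times> ('s \<Rightarrow> 's)) list \<Rightarrow> 's \<Rightarrow> 's \<Rightarrow> real" where
  "clock_gen cs x y = (\<Sum>(r, T)\<leftarrow>cs. r * (ind (T x = y) - ind (x = y)))"

text \<open>Sites [N] = {1..N} are list indices 0..N-1 (site 1 = index 0).
  Values 1,2,3,infinity.\<close>
datatype species = Fst | Snd | Thd | Hole

fun prank :: "species \<Rightarrow> nat" where
  "prank Fst = 0" | "prank Snd = 1" | "prank Thd = 2" | "prank Hole = 3"

definition pgt :: "species \<Rightarrow> species \<Rightarrow> bool" where
  "pgt a b \<longleftrightarrow> prank a < prank b"

definition swap_at :: "nat \<Rightarrow> 'a list \<Rightarrow> 'a list" where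
  "swap_at i xs = xs[i := xs ! Suc i, Suc i := xs ! i]"

definition ms_right :: "nat \<Rightarrow> species list \<Rightarrow> species list" where
  "ms_right i z = (if pgt (z ! i) (z ! Suc i) then swap_at i z else z)"
definition ms_left :: "nat \<Rightarrow> species list \<Rightarrow> species list" where
  "ms_left i z = (if pgt (z ! Suc i) (z ! i) then swap_at i z else z)"

fun ms_alpha :: "species list \<Rightarrow> species list" where
  "ms_alpha [] = []"
| "ms_alpha (a # z) = (case a of Hole \<Rightarrow> Fst | Thd \<Rightarrow> Snd | _ \<Rightarrow> a) # z"

fun ms_gamma :: "species list \<Rightarrow> species list" where
  "ms_gamma [] = []"
| "ms_gamma (a # z) = (case a of Fst \<Rightarrow> Hole | Snd \<Rightarrow> Thd | _ \<Rightarrow> a) # z"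

definition ms_states :: "nat \<Rightarrow> species list set" where
  "ms_states N = {z. length z = N}"

definition ms_gen :: "nat \<Rightarrow> real \<Rightarrow> real \<Rightarrow> real \<Rightarrow> species list \<Rightarrow> species list \<Rightarrow> real" where
  "ms_gen N q \<alpha> \<gamma> = clock_gen
     (concat (map (\<lambda>i. [(1, ms_right i), (q, ms_left i)]) [0..<N - 1])
      @ [(\<alpha>, ms_alpha), (\<gamma>, ms_gamma)])"

text \<open>Configurations in {0,1}^N as bool lists (True = particle).\<close>
definition as_right :: "nat \<Rightarrow> bool list \<Rightarrow> bool list" where
  "as_right i z = (if z ! i \<and> \<not> z ! Suc i then swap_at i z else z)"
definition as_left :: "nat \<Rightarrow> bool list \<Rightarrow> bool list" where
  "as_left i z = (if z ! Suc i \<and> \<not> z ! i then swap_at i z else z)"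

fun as_create :: "bool list \<Rightarrow> bool list" where
  "as_create [] = []" | "as_create (a # z) = (if \<not> a then True # z else a # z)"
fun as_remove :: "bool list \<Rightarrow> bool list" where
  "as_remove [] = []" | "as_remove (a # z) = (if a then False # z else a # z)"

definition asep_states :: "nat \<Rightarrow> bool list set" where
  "asep_states N = {z. length z = N}"

definition asep_gen :: "nat \<Rightarrow> real \<Rightarrow> real \<Rightarrow> real \<Rightarrow> bool list \<Rightarrow> bool list \<Rightarrow> real" where
  "asep_gen N q \<alpha> \<gamma> = clock_gen
     (concat (map (\<lambda>i. [(1, as_right i), (q, as_left i)]) [0..<N - 1])
      @ [(\<alpha>, as_create), (\<gamma>, as_remove)])"

definition proj :: "species list \<Rightarrow> bool list" where
  "proj z = map (\<lambda>a. a = Fst \<or> a = Snd) z"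

end

theory Submission
  imports Defs
begin

text \<open>Dynkin's lumping criterion: if for every state u and every image state w the total rate
  from u into the fibre of w equals Q' (p u) w, then the fibre sums of every power of Q, hence of
  exp(tQ), are given by the corresponding power of Q', and by induction on the number of observation
  times the projected chain has the finite-dimensional distributions of the chain with generator Q'.
  For the clock construction of the multi-species ASEP the criterion holds clock by clock: every
  clock map commutes with the projection, because sorting an edge or updating site 1 moves values
  in {1,2} past values in {3,\<infinity>} exactly as the corresponding ASEP clock moves a particle past a
  hole.\<close>

lemma abs_mat_pow_le:
  fixes Q :: "'s \<Rightarrow> 's \<Rightarrow> real"
  assumes "finite S" "S \<subseteq> T" "y \<in> T" and Q_le: "\<And>a b. a \<in> S \<Longrightarrow> b \<in> T \<Longrightarrow> \<bar>Q a b\<bar> \<le> R"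
  shows "\<bar>mat_pow S Q n x y\<bar> \<le> max 1 (real (card S) * R) ^ n"
  using \<open>y \<in> T\<close>
proof (induction n arbitrary: y)
  case 0
  then show ?case by simp
next
  case (Suc n)
  define K where "K = max 1 (real (card S) * R)"
  have "\<bar>mat_pow S Q (Suc n) x y\<bar> \<le> (\<Sum>z\<in>S. \<bar>mat_pow S Q n x z * Q z y\<bar>)"
    unfolding mat_pow.simps mat_mult_def by (rule sum_abs)
  also have "\<dots> \<le> (\<Sum>z\<in>S. K ^ n * R)"
  proof (rule sum_mono)
    fix z assume "z \<in> S"
    then show "\<bar>mat_pow S Q n x z * Q z y\<bar> \<le> K ^ n * R"
      using Suc.IH[of z] Q_le[of z y] \<open>S \<subseteq> T\<close> \<open>y \<in> T\<close>
      unfolding abs_mult K_def by (intro mult_mono) auto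
  qed
  also have "\<dots> = K ^ n * (real (card S) * R)" by simp
  also have "\<dots> \<le> K ^ n * K" unfolding K_def by (intro mult_left_mono) auto
  finally show ?case unfolding K_def by (simp add: mult.commute)
qed

lemma summable_trans_sg:
  fixes Q :: "'s \<Rightarrow> 's \<Rightarrow> real"
  assumes "finite S"
  shows "summable (\<lambda>n. t ^ n / fact n * mat_pow S Q n x y)"
proof -
  define R where "R = (\<Sum>a\<in>S. \<Sum>b\<in>insert y S. \<bar>Q a b\<bar>)"
  define K where "K = max 1 (real (card S) * R)"
  have "\<bar>Q a b\<bar> \<le> R" if "a \<in> S" "b \<in> insert y S" for a b
  proof -
    have "\<bar>Q a b\<bar> \<le> (\<Sum>b'\<in>insert y S. \<bar>Q a b'\<bar>)"
      using that \<open>finite S\<close> by (intro member_le_sum) auto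
    also have "\<dots> \<le> R"
      unfolding R_def using that \<open>finite S\<close> by (intro member_le_sum) auto
    finally show ?thesis .
  qed
  then have mat_pow_le: "\<bar>mat_pow S Q n x y\<bar> \<le> K ^ n" for n
    unfolding K_def using \<open>finite S\<close> by (intro abs_mat_pow_le[where T = "insert y S"]) auto
  have "summable (\<lambda>n. inverse (fact n) * (\<bar>t\<bar> * K) ^ n)" by (rule summable_exp)
  then show ?thesis
  proof (rule summable_comparison_test[rotated], intro exI allI impI)
    fix n :: nat
    have "norm (t ^ n / fact n * mat_pow S Q n x y) = \<bar>t\<bar> ^ n / fact n * \<bar>mat_pow S Q n x y\<bar>"
      by (simp add: abs_mult power_abs)
    also have "\<dots> \<le> \<bar>t\<bar> ^ n / fact n * K ^ n"
      by (intro mult_left_mono mat_pow_le) auto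
    also have "\<dots> = inverse (fact n) * (\<bar>t\<bar> * K) ^ n"
      by (simp add: power_mult_distrib field_simps)
    finally show "norm (t ^ n / fact n * mat_pow S Q n x y) \<le> inverse (fact n) * (\<bar>t\<bar> * K) ^ n" .
  qed
qed

locale lumpable =
  fixes S :: "'s set" and S' :: "'t set" and Q :: "'s \<Rightarrow> 's \<Rightarrow> real"
    and Q' :: "'t \<Rightarrow> 't \<Rightarrow> real" and p :: "'s \<Rightarrow> 't"
  assumes finite_states: "finite S" and image_states: "p ` S = S'"
    and sum_fibre_gen: "\<And>u w. u \<in> S \<Longrightarrow> (\<Sum>z\<in>{z\<in>S. p z = w}. Q u z) = Q' (p u) w"
begin

lemma sum_by_fibres:
  fixes g :: "'s \<Rightarrow> real" and h :: "'t \<Rightarrow> real"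
  shows "(\<Sum>u\<in>S. g u * h (p u)) = (\<Sum>v\<in>S'. (\<Sum>u\<in>{u\<in>S. p u = v}. g u) * h v)"
proof -
  have "(\<Sum>u\<in>S. g u * h (p u)) = (\<Sum>v\<in>S'. \<Sum>u\<in>{u\<in>S. p u = v}. g u * h (p u))"
    unfolding image_states[symmetric] by (rule sum.image_gen[OF finite_states])
  also have "\<dots> = (\<Sum>v\<in>S'. (\<Sum>u\<in>{u\<in>S. p u = v}. g u) * h v)"
    by (auto simp: sum_distrib_right intro!: sum.cong)
  finally show ?thesis .
qed

lemma sum_fibre_mat_pow:
  assumes "z \<in> S"
  shows "(\<Sum>y\<in>{y\<in>S. p y = w}. mat_pow S Q n z y) = mat_pow S' Q' n (p z) w"
proof (induction n arbitrary: w)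
  case 0
  have "finite {y\<in>S. p y = w}" using finite_states by simp
  then show ?case using assms by (simp add: sum.delta)
next
  case (Suc n)
  have "(\<Sum>y\<in>{y\<in>S. p y = w}. mat_pow S Q (Suc n) z y)
      = (\<Sum>u\<in>S. mat_pow S Q n z u * (\<Sum>y\<in>{y\<in>S. p y = w}. Q u y))"
    by (simp add: mat_mult_def sum_distrib_left sum.swap[where A = "{y\<in>S. p y = w}"])
  also have "\<dots> = (\<Sum>u\<in>S. mat_pow S Q n z u * Q' (p u) w)"
    by (simp add: sum_fibre_gen)
  also have "\<dots> = (\<Sum>v\<in>S'. mat_pow S' Q' n (p z) v * Q' v w)"
    using sum_by_fibres[of "mat_pow S Q n z" "\<lambda>v. Q' v w"] by (simp add: Suc.IH)
  also have "\<dots> = mat_pow S' Q' (Suc n) (p z) w" by (simp add: mat_mult_def)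
  finally show ?case .
qed

lemma sum_fibre_trans_sg:
  assumes "z \<in> S"
  shows "(\<Sum>y\<in>{y\<in>S. p y = w}. trans_sg S Q t z y) = trans_sg S' Q' t (p z) w"
proof -
  have "(\<Sum>y\<in>{y\<in>S. p y = w}. trans_sg S Q t z y)
      = (\<Sum>n. \<Sum>y\<in>{y\<in>S. p y = w}. t ^ n / fact n * mat_pow S Q n z y)"
    unfolding trans_sg_def
    by (rule suminf_sum[symmetric]) (rule summable_trans_sg[OF finite_states])
  also have "\<dots> = (\<Sum>n. t ^ n / fact n * mat_pow S' Q' n (p z) w)"
    by (simp add: sum_distrib_left[symmetric] sum_fibre_mat_pow[OF assms]
        del: times_divide_eq_left)
  finally show ?thesis unfolding trans_sg_def .
qed

lemma fdd_vimage:
  assumes "z \<in> S"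
  shows "fdd S Q z s (map (\<lambda>(t, A). (t, p -` A)) obs) = fdd S' Q' (p z) s obs"
  using assms
proof (induction obs arbitrary: z s)
  case Nil
  then show ?case by simp
next
  case (Cons a obs)
  obtain t A where a: "a = (t, A)" by (cases a)
  have image_A: "p ` (S \<inter> p -` A) = S' \<inter> A" using image_states by auto
  have fibre_A: "{y\<in>S \<inter> p -` A. p y = v} = {y\<in>S. p y = v}" if "v \<in> A" for v
    using that by auto
  have "fdd S Q z s (map (\<lambda>(t, A). (t, p -` A)) (a # obs))
      = (\<Sum>y\<in>S \<inter> p -` A. trans_sg S Q (t - s) z y * fdd S' Q' (p y) t obs)"
    using Cons.IH by (simp add: a)
  also have "\<dots> = (\<Sum>v\<in>S' \<inter> A. \<Sum>y\<in>{y\<in>S \<inter> p -` A. p y = v}.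
                      trans_sg S Q (t - s) z y * fdd S' Q' (p y) t obs)"
    unfolding image_A[symmetric] using finite_states by (intro sum.image_gen) auto
  also have "\<dots> = (\<Sum>v\<in>S' \<inter> A. (\<Sum>y\<in>{y\<in>S. p y = v}. trans_sg S Q (t - s) z y) * fdd S' Q' v t obs)"
    using fibre_A by (auto simp: sum_distrib_right intro!: sum.cong)
  also have "\<dots> = fdd S' Q' (p z) s (a # obs)"
    by (simp add: a sum_fibre_trans_sg[OF Cons.prems])
  finally show ?case .
qed

end

lemma sum_fibre_clock_gen:
  assumes "list_all2 (\<lambda>(r, T) (r', T'). r = r' \<and> T z \<in> S \<and> p (T z) = T' (p z)) cs cs'"
    and "finite S" and "z \<in> S"
  shows "(\<Sum>y\<in>{y\<in>S. p y = w}. clock_gen cs z y) = clock_gen cs' (p z) w"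
  using assms(1)
proof (induction rule: list_all2_induct)
  case Nil
  then show ?case by (simp add: clock_gen_def)
next
  case (Cons c cs c' cs')
  obtain r T r' T' where c: "c = (r, T)" and c': "c' = (r', T')" by (cases c, cases c')
  have clock: "r = r'" "T z \<in> S" "p (T z) = T' (p z)" using Cons.hyps(1) c c' by auto
  have "finite {y\<in>S. p y = w}" using assms(2) by simp
  then have "(\<Sum>y\<in>{y\<in>S. p y = w}. r * (ind (T z = y) - ind (z = y)))
      = r' * (ind (T' (p z) = w) - ind (p z = w))"
    using clock assms(3)
    by (simp add: sum_distrib_left[symmetric] sum_subtractf ind_def sum.delta)
  then show ?case
    using Cons.IH by (simp add: c c' clock_gen_def sum.distrib)
qed

lemma list_all2_concat_map:
  "(\<And>i. i \<in> set xs \<Longrightarrow> list_all2 P (f i) (g i)) \<Longrightarrow> list_all2 P (concat (map f xs)) (concat (map g xs))"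
  by (induction xs) (auto intro: list_all2_appendI)

lemma finite_ms_states: "finite (ms_states N)"
proof -
  have species_UNIV: "(UNIV :: species set) = {Fst, Snd, Thd, Hole}"
    using species.exhaust by auto
  have "finite {xs. set xs \<subseteq> (UNIV :: species set) \<and> length xs = N}"
    by (rule finite_lists_length_eq) (simp add: species_UNIV)
  then show ?thesis unfolding ms_states_def by simp
qed

lemma proj_ms_states: "proj ` ms_states N = asep_states N"
proof
  show "proj ` ms_states N \<subseteq> asep_states N"
    by (auto simp: ms_states_def asep_states_def proj_def)
  show "asep_states N \<subseteq> proj ` ms_states N"
  proof
    fix w assume "w \<in> asep_states N"
    then have "map (\<lambda>b. if b then Fst else Hole) w \<in> ms_states N"
      by (simp add: asep_states_def ms_states_def)
    moreover have "proj (map (\<lambda>b. if b then Fst else Hole) w) = w"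
      by (induction w) (auto simp: proj_def)
    ultimately show "w \<in> proj ` ms_states N" by (metis imageI)
  qed
qed

lemma swap_at_same: "xs ! i = xs ! Suc i \<Longrightarrow> swap_at i xs = xs"
  by (metis list_update_id swap_at_def)

lemma length_swap_at [simp]: "length (swap_at i xs) = length xs"
  by (simp add: swap_at_def)

lemma length_ms_right [simp]: "length (ms_right i z) = length z"
  by (simp add: ms_right_def)

lemma length_ms_left [simp]: "length (ms_left i z) = length z"
  by (simp add: ms_left_def)

lemma length_ms_alpha [simp]: "length (ms_alpha z) = length z"
  by (cases z) (simp_all split: species.split)

lemma length_ms_gamma [simp]: "length (ms_gamma z) = length z"
  by (cases z) (simp_all split: species.split)

lemma proj_swap_at: "Suc i < length z \<Longrightarrow> proj (swap_at i z) = swap_at i (proj z)"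
  by (simp add: swap_at_def proj_def map_update)

lemma proj_nth: "i < length z \<Longrightarrow> proj z ! i = (z ! i = Fst \<or> z ! i = Snd)"
  by (simp add: proj_def)

lemma proj_ms_right: "Suc i < length z \<Longrightarrow> proj (ms_right i z) = as_right i (proj z)"
  unfolding ms_right_def as_right_def
  by (cases "z ! i"; cases "z ! Suc i") (auto simp: pgt_def proj_swap_at proj_nth swap_at_same)

lemma proj_ms_left: "Suc i < length z \<Longrightarrow> proj (ms_left i z) = as_left i (proj z)"
  unfolding ms_left_def as_left_def
  by (cases "z ! i"; cases "z ! Suc i") (auto simp: pgt_def proj_swap_at proj_nth swap_at_same)

lemma proj_ms_alpha: "proj (ms_alpha z) = as_create (proj z)"
  by (cases z) (simp_all add: proj_def split: species.split)

lemma proj_ms_gamma: "proj (ms_gamma z) = as_remove (proj z)"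
  by (cases z) (simp_all add: proj_def split: species.split)

lemma sum_fibre_ms_gen:
  assumes "u \<in> ms_states N"
  shows "(\<Sum>z\<in>{z\<in>ms_states N. proj z = w}. ms_gen N q \<alpha> \<gamma> u z) = asep_gen N q \<alpha> \<gamma> (proj u) w"
  unfolding ms_gen_def asep_gen_def
proof (rule sum_fibre_clock_gen[OF _ finite_ms_states assms])
  show "list_all2 (\<lambda>(r, T) (r', T'). r = r' \<and> T u \<in> ms_states N \<and> proj (T u) = T' (proj u))
    (concat (map (\<lambda>i. [(1, ms_right i), (q, ms_left i)]) [0..<N - 1]) @ [(\<alpha>, ms_alpha), (\<gamma>, ms_gamma)])
    (concat (map (\<lambda>i. [(1, as_right i), (q, as_left i)]) [0..<N - 1]) @ [(\<alpha>, as_create), (\<gamma>, as_remove)])"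
    using assms
    by (intro list_all2_appendI list_all2_concat_map)
       (auto simp: ms_states_def proj_ms_right proj_ms_left proj_ms_alpha proj_ms_gamma)
qed

theorem lemma2p1:
  fixes N :: nat and q \<alpha> \<gamma> :: real
    and z0 :: "species list" and obs :: "(real \<times> bool list set) list"
  assumes "0 < q" "q < 1" "\<gamma> > 0" "\<alpha> > \<gamma>"
    and "z0 \<in> ms_states N"
    and "sorted (map fst obs)" "\<forall>p\<in>set obs. 0 \<le> fst p"
  shows "fdd (ms_states N) (ms_gen N q \<alpha> \<gamma>) z0 0 (map (\<lambda>(t, A). (t, proj -` A)) obs)
       = fdd (asep_states N) (asep_gen N q \<alpha> \<gamma>) (proj z0) 0 obs"
proof -
  interpret lumpable "ms_states N" "asep_states N" "ms_gen N q \<alpha> \<gamma>" "asep_gen N q \<alpha> \<gamma>" proj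
    using finite_ms_states proj_ms_states sum_fibre_ms_gen by unfold_locales
  show ?thesis using fdd_vimage \<open>z0 \<in> ms_states N\<close> .
qed

end
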